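(* Let $X$ be an $n$-dimensional real normed space and let $Y \subseteq X$ be a $k$-dimensional subspace, where $1 \leq k \leq n-1$. Then there exists $C>0$ (depending on $Y$) such that for every $k$-dimensional subspace $Y_0 \subseteq X$ we have $\lambda(Y_0, X) \leq \lambda(Y, X) + C\,d(Y, Y_0)$.
   Context: For a subspace $V\subseteq X$, $\lambda(V,X)$ is the infimum of the operator norms of linear projections $P:X\to V$ ($P|_V=\mathrm{id}_V$). For two $k$-dimensional subspaces $Y,Z$, $d(Y,Z)$ is the Hausdorff distance (with respect to the norm of $X$) between the unit spheres of $Y$ and $Z$. *)

theory Defs
  imports "HOL-Analysis.Analysis"
begin

definition proj_const :: "'a::real_normed_vector set \<Rightarrow> real" where
  "proj_const V = Inf {onorm P | P. linear P \<and> range P \<subseteq> V \<and> (\<forall>v\<in>V. P v = v)}"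

definition hausdorff_dist :: "'a::metric_space set \<Rightarrow> 'a set \<Rightarrow> real" where
  "hausdorff_dist S T = max (SUP x\<in>S. infdist x T) (SUP y\<in>T. infdist y S)"

definition unit_sphere_of :: "'a::real_normed_vector set \<Rightarrow> 'a set" where
  "unit_sphere_of V = {v \<in> V. norm v = 1}"

definition subspace_dist :: "'a::real_normed_vector set \<Rightarrow> 'a set \<Rightarrow> real" where
  "subspace_dist Y Z = hausdorff_dist (unit_sphere_of Y) (unit_sphere_of Z)"

end

(*
  Let P be a projection onto Y and d = d(Y,Y0) with |P| d <= 1/2. Every unit vector of Y0 lies
  within d of a unit vector of Y, on which P is the identity, so |P v| >= (1 - |P| d) |v| on Y0.
  Hence P maps Y0 injectively, and by counting dimensions onto Y, and Q = (P restricted to Y0)^-1 o P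
  is a projection onto Y0 with |Q| <= |P| / (1 - |P| d) <= |P| + 2 |P|^2 d.
  When d is not small it suffices that the projection constants of all subspaces are bounded
  uniformly: orthogonal projections for the inner product in which a fixed basis is orthonormal
  are contractions for a Euclidean norm, and in finite dimension that norm is equivalent to |.|.
*)

theory Submission
  imports Defs
begin

definition linear_projection :: "('a::real_vector \<Rightarrow> 'a) \<Rightarrow> 'a set \<Rightarrow> bool" where
  "linear_projection P V \<longleftrightarrow> linear P \<and> range P \<subseteq> V \<and> (\<forall>v\<in>V. P v = v)"

lemma proj_const_eq_Inf_onorm: "proj_const V = Inf {onorm P | P. linear_projection P V}"
  by (simp add: proj_const_def linear_projection_def)

lemma unit_sphere_of_nonempty:
  assumes "subspace V" "v \<in> V" "v \<noteq> 0"
  shows "unit_sphere_of V \<noteq> {}"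
proof -
  have "(1 / norm v) *\<^sub>R v \<in> unit_sphere_of V"
    using assms by (simp add: unit_sphere_of_def subspace_scale)
  then show ?thesis by blast
qed

lemma infdist_le_subspace_dist:
  assumes "unit_sphere_of Y \<noteq> {}" "u \<in> unit_sphere_of Y0"
  shows "infdist u (unit_sphere_of Y) \<le> subspace_dist Y Y0"
proof -
  obtain y where y: "y \<in> unit_sphere_of Y" using assms(1) by blast
  have "infdist w (unit_sphere_of Y) \<le> 2" if "w \<in> unit_sphere_of Y0" for w
    using infdist_le[OF y, of w] norm_triangle_ineq4[of w y] that y
    by (simp add: unit_sphere_of_def dist_norm)
  then have "infdist u (unit_sphere_of Y) \<le> (SUP w\<in>unit_sphere_of Y0. infdist w (unit_sphere_of Y))"
    using assms(2) by (intro cSUP_upper bdd_aboveI2) auto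
  then show ?thesis by (simp add: subspace_dist_def hausdorff_dist_def le_max_iff_disj)
qed

lemma subspace_dist_nonneg:
  assumes "unit_sphere_of Y \<noteq> {}" "unit_sphere_of Y0 \<noteq> {}"
  shows "0 \<le> subspace_dist Y Y0"
  using assms infdist_le_subspace_dist infdist_nonneg order_trans by blast

lemma le_mult_infdist:
  assumes "A \<noteq> {}" "c \<ge> 0" "\<And>y. y \<in> A \<Longrightarrow> a \<le> c * dist x y"
  shows "a \<le> c * infdist x A"
proof (cases "c = 0")
  case True
  with assms show ?thesis by auto
next
  case False
  then have "a / c \<le> infdist x A"
    unfolding infdist_notempty[OF assms(1)] using assms
    by (intro cINF_greatest) (auto simp: divide_le_eq mult.commute)
  with False assms(2) show ?thesis by (simp add: divide_le_eq mult.commute)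
qed

lemma linear_projection_norm_lower_bound:
  assumes P: "linear_projection P Y" "bounded_linear P"
    and Y: "unit_sphere_of Y \<noteq> {}" and Y0: "subspace Y0" "v \<in> Y0"
  shows "(1 - onorm P * subspace_dist Y Y0) * norm v \<le> norm (P v)"
proof (cases "v = 0")
  case True
  then show ?thesis using linear_0[of P] P(1) by (simp add: linear_projection_def)
next
  case False
  define u where "u = (1 / norm v) *\<^sub>R v"
  have u: "u \<in> unit_sphere_of Y0"
    using False Y0 by (simp add: u_def unit_sphere_of_def subspace_scale)
  have "1 - norm (P u) \<le> onorm P * dist u y" if y: "y \<in> unit_sphere_of Y" for y
  proof -
    have "1 = norm (P u + P (y - u))"
      using y P(1) by (simp add: linear_projection_def unit_sphere_of_def linear_diff)
    also have "\<dots> \<le> norm (P u) + norm (P (y - u))"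
      by (rule norm_triangle_ineq)
    also have "\<dots> \<le> norm (P u) + onorm P * dist u y"
      using onorm[OF P(2), of "y - u"] by (simp add: dist_norm norm_minus_commute)
    finally show ?thesis by simp
  qed
  then have "1 - norm (P u) \<le> onorm P * infdist u (unit_sphere_of Y)"
    by (intro le_mult_infdist Y onorm_pos_le P(2))
  also have "\<dots> \<le> onorm P * subspace_dist Y Y0"
    by (intro mult_left_mono infdist_le_subspace_dist Y u onorm_pos_le P(2))
  finally have "1 - onorm P * subspace_dist Y Y0 \<le> norm (P v) / norm v"
    using P(1) False by (simp add: u_def linear_projection_def linear_scale)
  then show ?thesis using False by (simp add: pos_le_divide_eq)
qed

lemma inj_on_if_norm_lower_bound:
  assumes "linear P" "subspace Y0" "c > 0" "\<And>v. v \<in> Y0 \<Longrightarrow> c * norm v \<le> norm (P v)"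
  shows "inj_on P Y0"
proof (rule inj_onI)
  fix v w assume "v \<in> Y0" "w \<in> Y0" "P v = P w"
  then have "c * norm (v - w) \<le> 0"
    using assms(4)[of "v - w"] assms(1,2) by (simp add: subspace_diff linear_diff)
  with assms(3) show "v = w" by (simp add: mult_le_0_iff)
qed

lemma linear_projection_along_kernel:
  assumes P: "linear P" "range P \<subseteq> P ` Y0" "inj_on P Y0" and Y0: "subspace Y0"
  shows "\<exists>Q. linear_projection Q Y0 \<and> (\<forall>x. P (Q x) = P x)"
proof -
  define Q where "Q = inv_into Y0 P \<circ> P"
  have Q: "Q x \<in> Y0" "P (Q x) = P x" for x
  proof -
    have "P x \<in> P ` Y0" using P(2) by blast
    then show "Q x \<in> Y0" "P (Q x) = P x" by (simp_all add: Q_def inv_into_into f_inv_into_f)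
  qed
  have Q_unique: "Q x = v" if "v \<in> Y0" "P v = P x" for x v
    using inj_onD[OF P(3), of "Q x" v] Q[of x] that by simp
  have "linear Q"
  proof (rule linearI)
    show "Q (x + y) = Q x + Q y" for x y
      using Q[of x] Q[of y] Y0 P(1) by (intro Q_unique) (auto simp: subspace_add linear_add)
    show "Q (r *\<^sub>R x) = r *\<^sub>R Q x" for r x
      using Q[of x] Y0 P(1) by (intro Q_unique) (auto simp: subspace_scale linear_scale)
  qed
  then show ?thesis
    using Q Q_unique by (auto simp: linear_projection_def)
qed

locale finite_basis =
  fixes B :: "'a::real_normed_vector set"
  assumes finite_B: "finite B" and independent_B: "independent B" and span_B: "span B = UNIV"
begin

sublocale fd: finite_dimensional_vector_space "scaleR :: real \<Rightarrow> 'a \<Rightarrow> 'a" B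
  rewrites "module.dependent (*\<^sub>R) = dependent"
    and "module.span (*\<^sub>R) = span"
    and "module.subspace (*\<^sub>R) = subspace"
    and "vector_space.dim (*\<^sub>R) = dim"
proof unfold_locales
  show "finite B" "\<not> module.dependent (*\<^sub>R) B" "module.span (*\<^sub>R) B = UNIV"
    using finite_B independent_B span_B by (simp_all add: dependent_raw_def span_raw_def)
qed (simp_all add: dependent_raw_def span_raw_def subspace_raw_def dim_raw_def)

sublocale fd_pair: finite_dimensional_vector_space_pair_1
    "scaleR :: real \<Rightarrow> 'a \<Rightarrow> 'a" B "scaleR :: real \<Rightarrow> 'a \<Rightarrow> 'a"
  rewrites "module.span (*\<^sub>R) = span"
    and "vector_space.dim (*\<^sub>R) = dim"
    and "Vector_Spaces.linear (*\<^sub>R) (*\<^sub>R) = linear"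
  by unfold_locales (auto simp: span_raw_def dim_raw_def linear_def real_scaleR_def[abs_def])

abbreviation coord :: "'a \<Rightarrow> 'a \<Rightarrow> real" where
  "coord x b \<equiv> representation B x b"

lemma coord_add: "coord (x + y) b = coord x b + coord y b"
  using representation_add[OF independent_B, of y x] span_B by simp

lemma coord_scaleR: "coord (c *\<^sub>R x) b = c * coord x b"
  using representation_scale[OF independent_B, of x c] span_B by simp

lemma coord_diff: "coord (x - y) b = coord x b - coord y b"
  using representation_diff[OF independent_B, of y x] span_B by simp

lemma sum_coord_scaleR: "(\<Sum>b\<in>B. coord x b *\<^sub>R b) = x"
  using sum_representation_eq[OF independent_B _ finite_B] span_B by simp

lemma coord_bounded_imp_convergent_subseq:
  fixes y :: "nat \<Rightarrow> 'a"
  assumes "\<And>n. (\<Sum>b\<in>B. \<bar>coord (y n) b\<bar>) \<le> K"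
  shows "\<exists>l r. strict_mono r \<and> (\<forall>b\<in>B. (\<lambda>n. coord (y (r n)) b) \<longlonglongrightarrow> l b) \<and>
    (\<lambda>n. y (r n)) \<longlonglongrightarrow> (\<Sum>b\<in>B. l b *\<^sub>R b)"
proof -
  have "bounded ((\<lambda>c. c b) ` range (\<lambda>n. coord (y n)))" if "b \<in> B" for b
  proof -
    have "\<bar>coord (y n) b\<bar> \<le> K" for n
      using member_le_sum[of b B "\<lambda>b. \<bar>coord (y n) b\<bar>"] that finite_B assms[of n] by simp
    then show ?thesis unfolding bounded_iff by auto
  qed
  from compact_lemma_general[where proj="\<lambda>c b. c b" and unproj="\<lambda>c. c" and basis=B
      and f="\<lambda>n. coord (y n)",
      OF finite_B this]
  obtain l r where r: "strict_mono r"
    and lim: "\<And>e. e > 0 \<Longrightarrow> eventually (\<lambda>n. \<forall>b\<in>B. dist (coord (y (r n)) b) (l b) < e) sequentially"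
    by blast
  have coord_lim: "(\<lambda>n. coord (y (r n)) b) \<longlonglongrightarrow> l b" if "b \<in> B" for b
  proof (rule tendstoI)
    fix e :: real assume "e > 0"
    from lim[OF this] show "eventually (\<lambda>n. dist (coord (y (r n)) b) (l b) < e) sequentially"
      by eventually_elim (use that in auto)
  qed
  then have "(\<lambda>n. \<Sum>b\<in>B. coord (y (r n)) b *\<^sub>R b) \<longlonglongrightarrow> (\<Sum>b\<in>B. l b *\<^sub>R b)"
    by (intro tendsto_intros)
  with r coord_lim show ?thesis
    unfolding sum_coord_scaleR by blast
qed

lemma coord_sum_le_norm: "\<exists>m>0. \<forall>x. m * (\<Sum>b\<in>B. \<bar>coord x b\<bar>) \<le> norm x"
  \<comment> \<open>Otherwise vectors with coordinate sum 1 and norms tending to 0 have a coordinatewise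
    convergent subsequence, whose limit is 0 and still has coordinate sum 1.\<close>
proof (rule ccontr)
  define s where "s x = (\<Sum>b\<in>B. \<bar>coord x b\<bar>)" for x
  assume "\<not> ?thesis"
  then have small: "\<exists>x. norm x < m * s x" if "m > 0" for m
    using that by (auto simp: s_def not_le)
  have "\<exists>y. s y = 1 \<and> norm y < 1 / Suc n" for n
  proof -
    obtain x where x: "norm x < s x / Suc n" using small[of "1 / Suc n"] by auto
    then have "s x / Suc n > 0" using norm_ge_zero[of x] by linarith
    then have "s x > 0" by (simp add: zero_less_divide_iff)
    have "s ((1 / s x) *\<^sub>R x) = (1 / s x) * s x"
      by (simp add: s_def coord_scaleR abs_mult sum_distrib_left)
    moreover have "norm ((1 / s x) *\<^sub>R x) = norm x / s x"
      using \<open>s x > 0\<close> by simp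
    moreover have "norm x / s x < 1 / Suc n"
      using x \<open>s x > 0\<close> by (subst pos_divide_less_eq) simp_all
    ultimately have "s ((1 / s x) *\<^sub>R x) = 1 \<and> norm ((1 / s x) *\<^sub>R x) < 1 / Suc n"
      using \<open>s x > 0\<close> by simp
    then show ?thesis by blast
  qed
  then obtain y where y: "\<And>n. s (y n) = 1" "\<And>n. norm (y n) < 1 / Suc n" by metis
  have "(\<Sum>b\<in>B. \<bar>coord (y n) b\<bar>) \<le> 1" for n
    using y(1)[of n] by (simp add: s_def)
  then obtain l r where r: "strict_mono r" and coord_lim: "\<forall>b\<in>B. (\<lambda>n. coord (y (r n)) b) \<longlonglongrightarrow> l b"
    and y_lim: "(\<lambda>n. y (r n)) \<longlonglongrightarrow> (\<Sum>b\<in>B. l b *\<^sub>R b)"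
    using coord_bounded_imp_convergent_subseq by blast
  have "y \<longlonglongrightarrow> 0"
  proof (rule tendsto_norm_zero_cancel, rule Lim_null_comparison[OF _ LIMSEQ_inverse_real_of_nat])
    show "\<forall>\<^sub>F n in sequentially. norm (norm (y n)) \<le> inverse (real (Suc n))"
      using y(2) by (simp add: less_imp_le divide_inverse)
  qed
  then have "(\<lambda>n. y (r n)) \<longlonglongrightarrow> 0"
    using LIMSEQ_subseq_LIMSEQ[OF _ r] by (simp add: o_def)
  with y_lim have "(\<Sum>b\<in>B. l b *\<^sub>R b) = 0" by (rule LIMSEQ_unique)
  then have "\<forall>b\<in>B. l b = 0"
    using independent_B by (auto simp: dependent_finite[OF finite_B])
  have "(\<lambda>n. s (y (r n))) \<longlonglongrightarrow> (\<Sum>b\<in>B. \<bar>l b\<bar>)"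
    unfolding s_def using coord_lim by (intro tendsto_intros) auto
  moreover have "(\<lambda>n. s (y (r n))) \<longlonglongrightarrow> 1"
    using y(1) by simp
  ultimately have "(\<Sum>b\<in>B. \<bar>l b\<bar>) = 1"
    by (rule LIMSEQ_unique)
  with \<open>\<forall>b\<in>B. l b = 0\<close> show False by simp
qed

lemma linear_imp_bounded_linear:
  fixes f :: "'a \<Rightarrow> 'b::real_normed_vector"
  assumes f: "linear f"
  shows "bounded_linear f"
proof -
  obtain m where m: "m > 0" "\<And>x. m * (\<Sum>b\<in>B. \<bar>coord x b\<bar>) \<le> norm x"
    using coord_sum_le_norm by blast
  define F where "F = (\<Sum>b\<in>B. norm (f b))"
  have "norm (f x) \<le> norm x * (F / m)" for x
  proof -
    have "norm (f x) = norm (\<Sum>b\<in>B. coord x b *\<^sub>R f b)"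
      using linear_sum[OF f, of "\<lambda>b. coord x b *\<^sub>R b" B] sum_coord_scaleR[of x]
      by (simp add: linear_scale[OF f])
    also have "\<dots> \<le> (\<Sum>b\<in>B. \<bar>coord x b\<bar> * norm (f b))"
      by (rule norm_sum[THEN order_trans]) simp
    also have "\<dots> \<le> (\<Sum>b\<in>B. \<bar>coord x b\<bar> * F)"
      unfolding F_def by (intro sum_mono mult_left_mono member_le_sum finite_B) auto
    also have "\<dots> = (\<Sum>b\<in>B. \<bar>coord x b\<bar>) * F"
      by (simp add: sum_distrib_right)
    also have "\<dots> \<le> (norm x / m) * F"
      using m by (intro mult_right_mono) (simp_all add: F_def sum_nonneg pos_le_divide_eq mult.commute)
    finally show ?thesis by simp
  qed
  then show ?thesis
    using f by (intro bounded_linear_intro[where K="F / m"]) (auto simp: linear_add linear_scale)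
qed

definition coord_inner :: "'a \<Rightarrow> 'a \<Rightarrow> real" where
  "coord_inner x y = (\<Sum>b\<in>B. coord x b * coord y b)"

lemma coord_inner_commute: "coord_inner x y = coord_inner y x"
  by (simp add: coord_inner_def mult.commute)

lemma coord_inner_add_left: "coord_inner (x + y) z = coord_inner x z + coord_inner y z"
  by (simp add: coord_inner_def coord_add distrib_right sum.distrib)

lemma coord_inner_scaleR_left: "coord_inner (c *\<^sub>R x) y = c * coord_inner x y"
  by (simp add: coord_inner_def coord_scaleR sum_distrib_left mult.assoc)

lemma coord_inner_diff_left: "coord_inner (x - y) z = coord_inner x z - coord_inner y z"
  by (simp add: coord_inner_def coord_diff left_diff_distrib sum_subtractf)

lemma linear_coord_inner_right: "linear (coord_inner x)"
  by (rule linearI) (simp_all add: coord_inner_commute[of x] coord_inner_add_left coord_inner_scaleR_left)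

lemma coord_inner_self: "coord_inner x x = (L2_set (coord x) B)\<^sup>2"
  by (simp add: coord_inner_def L2_set_def sum_nonneg power2_eq_square)

lemma coord_inner_self_eq_0: "coord_inner x x = 0 \<longleftrightarrow> x = 0"
proof
  assume "coord_inner x x = 0"
  then have "\<forall>b\<in>B. coord x b = 0"
    by (simp add: coord_inner_self L2_set_eq_0_iff finite_B)
  then show "x = 0" using sum_coord_scaleR[of x] by simp
qed (simp add: coord_inner_def representation_zero)

definition coord_orth_proj :: "('a \<Rightarrow> 'a) \<Rightarrow> 'a set \<Rightarrow> bool" where
  "coord_orth_proj Q V \<longleftrightarrow> linear_projection Q V \<and> (\<forall>x. \<forall>v\<in>V. coord_inner (x - Q x) v = 0)"

lemma coord_orth_proj_insert_orthogonal:
  assumes "coord_orth_proj Q (span S)"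
    and a: "a \<noteq> 0" "Q a = 0" "\<And>v. v \<in> span S \<Longrightarrow> coord_inner v a = 0"
  shows "coord_orth_proj (\<lambda>x. Q x + (coord_inner x a / coord_inner a a) *\<^sub>R a) (span (insert a S))"
proof -
  have Q: "linear Q" "\<And>x. Q x \<in> span S" "\<And>v. v \<in> span S \<Longrightarrow> Q v = v"
    "\<And>x v. v \<in> span S \<Longrightarrow> coord_inner (x - Q x) v = 0"
    using assms(1) by (auto simp: coord_orth_proj_def linear_projection_def)
  have a_pos: "coord_inner a a \<noteq> 0"
    using a(1) by (simp add: coord_inner_self_eq_0)
  define c where "c x = coord_inner x a / coord_inner a a" for x
  define Q' where "Q' x = Q x + c x *\<^sub>R a" for x
  have c_a: "c a = 1"
    using a_pos by (simp add: c_def)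
  have c_S: "c v = 0" if "v \<in> span S" for v
    using a(3)[OF that] by (simp add: c_def)
  have linear_Q': "linear Q'"
  proof (rule linearI)
    show "Q' (x + y) = Q' x + Q' y" for x y
      using Q(1) by (simp add: Q'_def c_def linear_add coord_inner_add_left add_divide_distrib
          scaleR_add_left algebra_simps)
    show "Q' (r *\<^sub>R x) = r *\<^sub>R Q' x" for r x
      using Q(1) by (simp add: Q'_def c_def linear_scale coord_inner_scaleR_left scaleR_add_right)
  qed
  have "Q' x \<in> span (insert a S)" for x
    using Q(2)[of x] unfolding Q'_def
    by (intro span_add span_scale) (auto intro: span_base span_mono[THEN subsetD, OF subset_insertI])
  moreover have "Q' v = v" if "v \<in> span (insert a S)" for v
  proof -
    have "Q' y = id y" if "y \<in> insert a S" for y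
      using that Q(3) c_S c_a a(2) by (auto simp: Q'_def span_base)
    from linear_eq_on_span[OF linear_Q' linear_id this that] show ?thesis by simp
  qed
  moreover have "coord_inner (x - Q' x) v = 0" if "v \<in> span (insert a S)" for x v
  proof (rule linear_eq_0_on_span[OF linear_coord_inner_right _ that])
    have expand: "coord_inner (x - Q' x) y = coord_inner (x - Q x) y - c x * coord_inner a y" for y
      by (simp add: Q'_def diff_diff_add[symmetric] coord_inner_diff_left coord_inner_scaleR_left)
    have "coord_inner (x - Q x) a = c x * coord_inner a a"
      using a_pos a(3)[OF Q(2)] by (simp add: c_def coord_inner_diff_left)
    moreover have "coord_inner a v = 0" if "v \<in> span S" for v
      using a(3)[OF that] by (simp add: coord_inner_commute)
    ultimately show "coord_inner (x - Q' x) y = 0" if "y \<in> insert a S" for y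
      using that Q(4) by (auto simp: expand span_base)
  qed
  ultimately have "coord_orth_proj Q' (span (insert a S))"
    using linear_Q' by (auto simp: coord_orth_proj_def linear_projection_def)
  moreover have "Q' = (\<lambda>x. Q x + (coord_inner x a / coord_inner a a) *\<^sub>R a)"
    by (simp add: fun_eq_iff Q'_def c_def)
  ultimately show ?thesis by simp
qed

lemma coord_orth_proj_insert:
  assumes Q: "coord_orth_proj Q (span S)"
  shows "\<exists>Q'. coord_orth_proj Q' (span (insert a S))"
proof (cases "a \<in> span S")
  case True
  with Q show ?thesis by (auto simp: span_redundant)
next
  case False
  define a' where "a' = a - Q a"
  have Q_range: "Q x \<in> span S" for x
    using Q by (auto simp: coord_orth_proj_def linear_projection_def)
  have a'_nonzero: "a' \<noteq> 0"
    using False Q_range[of a] by (auto simp: a'_def)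
  have Q_a': "Q a' = 0"
    using Q Q_range[of a] by (simp add: a'_def coord_orth_proj_def linear_projection_def linear_diff)
  have a'_orth: "coord_inner v a' = 0" if "v \<in> span S" for v
    using Q that by (simp add: a'_def coord_orth_proj_def coord_inner_commute)
  have "span (insert a S) = span (insert a' S)"
    by (rule eq_span_insert_eq) (simp add: a'_def Q_range)
  with coord_orth_proj_insert_orthogonal[OF Q a'_nonzero Q_a' a'_orth] show ?thesis
    by auto
qed

lemma coord_orth_proj_exists:
  assumes "subspace V"
  shows "\<exists>Q. coord_orth_proj Q V"
proof -
  obtain C where C: "C \<subseteq> V" "independent C" "V \<subseteq> span C"
    by (meson basis_exists)
  have "finite C"
    using independent_span_bound[OF finite_B C(2)] span_B by auto
  then have "\<exists>Q. coord_orth_proj Q (span C)"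
  proof (induction C rule: finite_induct)
    case empty
    show ?case
      by (rule exI[of _ "\<lambda>x. 0"]) (simp add: coord_orth_proj_def linear_projection_def linear_zero coord_inner_def representation_zero)
  next
    case (insert a C)
    then show ?case by (blast intro: coord_orth_proj_insert)
  qed
  moreover have "span C = V"
    using span_subspace[OF C(1,3) assms] .
  ultimately show ?thesis by simp
qed

lemma coord_orth_proj_L2_le:
  assumes "coord_orth_proj Q V"
  shows "L2_set (coord (Q x)) B \<le> L2_set (coord x) B"
proof -
  define r where "r = x - Q x"
  have "coord_inner r (Q x) = 0"
    using assms by (auto simp: coord_orth_proj_def linear_projection_def r_def)
  moreover have "coord_inner x x = coord_inner (Q x + r) (Q x + r)"
    by (simp add: r_def)
  ultimately have "coord_inner x x = coord_inner (Q x) (Q x) + coord_inner r r"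
    using linear_add[OF linear_coord_inner_right] coord_inner_commute[of "Q x" r]
    by (simp add: coord_inner_add_left)
  then have "(L2_set (coord (Q x)) B)\<^sup>2 \<le> (L2_set (coord x) B)\<^sup>2"
    by (simp add: coord_inner_self)
  then show ?thesis by (simp add: power2_le_iff_abs_le)
qed

lemma norm_le_L2_coord: "norm x \<le> (\<Sum>b\<in>B. norm b) * L2_set (coord x) B"
proof -
  have coord_le: "\<bar>coord x b\<bar> \<le> L2_set (coord x) B" if "b \<in> B" for b
    using member_le_L2_set[OF finite_B that, of "\<lambda>b. \<bar>coord x b\<bar>"] by (simp add: L2_set_def)
  have "norm x = norm (\<Sum>b\<in>B. coord x b *\<^sub>R b)"
    using sum_coord_scaleR[of x] by simp
  also have "\<dots> \<le> (\<Sum>b\<in>B. \<bar>coord x b\<bar> * norm b)"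
    by (rule norm_sum[THEN order_trans]) simp
  also have "\<dots> \<le> (\<Sum>b\<in>B. norm b * L2_set (coord x) B)"
    using coord_le by (intro sum_mono) (simp add: mult.commute mult_left_mono)
  finally show ?thesis
    by (simp add: sum_distrib_right)
qed

lemma uniform_projection_bound:
  "\<exists>M\<ge>0. \<forall>V :: 'a set. subspace V \<longrightarrow>
     (\<exists>Q. linear_projection Q V \<and> (\<forall>x. norm (Q x) \<le> M * norm x))"
proof -
  obtain m where m: "m > 0" "\<And>x. m * (\<Sum>b\<in>B. \<bar>coord x b\<bar>) \<le> norm x"
    using coord_sum_le_norm by blast
  define K where "K = (\<Sum>b\<in>B. norm b)"
  have K: "K \<ge> 0" by (simp add: K_def sum_nonneg)
  have "\<exists>Q. linear_projection Q V \<and> (\<forall>x. norm (Q x) \<le> K / m * norm x)"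
    if V: "subspace V" for V :: "'a set"
  proof -
    obtain Q where Q: "coord_orth_proj Q V"
      using coord_orth_proj_exists[OF V] by blast
    have "norm (Q x) \<le> K / m * norm x" for x
    proof -
      have "m * L2_set (coord x) B \<le> m * (\<Sum>b\<in>B. \<bar>coord x b\<bar>)"
        using m(1) L2_set_le_sum_abs[of "coord x" B] by simp
      also have "\<dots> \<le> norm x" by (rule m(2))
      finally have L2_le: "L2_set (coord x) B \<le> norm x / m"
        using m(1) by (simp add: pos_le_divide_eq mult.commute)
      have "norm (Q x) \<le> K * L2_set (coord (Q x)) B"
        using norm_le_L2_coord[of "Q x"] by (simp add: K_def)
      also have "\<dots> \<le> K * (norm x / m)"
        using coord_orth_proj_L2_le[OF Q, of x] L2_le K by (intro mult_left_mono) auto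
      finally show ?thesis by simp
    qed
    with Q show ?thesis by (auto simp: coord_orth_proj_def)
  qed
  with K m(1) show ?thesis by (intro exI[of _ "K / m"]) auto
qed

lemma proj_const_le_onorm:
  fixes V :: "'a set"
  assumes "linear_projection P V"
  shows "proj_const V \<le> onorm P"
  unfolding proj_const_eq_Inf_onorm
  by (rule cInf_lower) (use assms in \<open>auto intro!: bdd_belowI[of _ 0] onorm_pos_le
      linear_imp_bounded_linear simp: linear_projection_def\<close>)

lemma proj_const_nonneg:
  fixes V :: "'a set"
  assumes "subspace V"
  shows "0 \<le> proj_const V"
proof -
  obtain P where "linear_projection P V"
    using uniform_projection_bound assms by blast
  then show ?thesis
    unfolding proj_const_eq_Inf_onorm by (intro cInf_greatest) (auto intro!: onorm_pos_le
        linear_imp_bounded_linear simp: linear_projection_def)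
qed

lemma proj_const_uniform_bound: "\<exists>M. \<forall>V :: 'a set. subspace V \<longrightarrow> proj_const V \<le> M"
proof -
  obtain M where M_nonneg: "M \<ge> 0" and M: "\<And>V :: 'a set. subspace V \<Longrightarrow>
      \<exists>Q. linear_projection Q V \<and> (\<forall>x. norm (Q x) \<le> M * norm x)"
    using uniform_projection_bound by blast
  have "proj_const V \<le> M" if V: "subspace V" for V :: "'a set"
  proof -
    obtain Q where Q: "linear_projection Q V" "\<And>x. norm (Q x) \<le> M * norm x"
      using M[OF V] by blast
    have "onorm Q \<le> M" using M_nonneg Q(2) by (rule onorm_bound)
    with proj_const_le_onorm[OF Q(1)] show ?thesis by linarith
  qed
  then show ?thesis by blast
qed

lemma proj_const_approx:
  fixes V :: "'a set"
  assumes "subspace V" "e > 0"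
  shows "\<exists>P. linear_projection P V \<and> onorm P < proj_const V + e"
proof -
  obtain Q where "linear_projection Q V"
    using uniform_projection_bound assms(1) by blast
  then have "{onorm P | P. linear_projection P V} \<noteq> {}" by blast
  from cInf_lessD[OF this, of "proj_const V + e"] show ?thesis
    using assms(2) by (auto simp: proj_const_eq_Inf_onorm)
qed

lemma unit_sphere_of_nonempty_if_dim:
  fixes V :: "'a set"
  assumes "subspace V" "dim V \<ge> 1"
  shows "unit_sphere_of V \<noteq> {}"
proof -
  have "dim V \<noteq> 0" using assms(2) by linarith
  then have "\<not> V \<subseteq> {0}" by simp
  then obtain v where "v \<in> V" "v \<noteq> 0" by blast
  with assms(1) show ?thesis by (rule unit_sphere_of_nonempty)
qed

lemma proj_const_perturbation:
  fixes Y Y0 :: "'a set"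
  assumes P: "linear_projection P Y"
    and Y: "subspace Y" "subspace Y0" "dim Y0 = dim Y" "dim Y \<ge> 1"
    and small: "onorm P * subspace_dist Y Y0 \<le> 1/2"
  shows "proj_const Y0 \<le> onorm P + 2 * (onorm P)\<^sup>2 * subspace_dist Y Y0"
proof -
  define p d where "p = onorm P" and "d = subspace_dist Y Y0"
  have P_linear: "linear P" and P_bounded: "bounded_linear P"
    using P linear_imp_bounded_linear by (auto simp: linear_projection_def)
  have p: "p \<ge> 0" "\<And>x. norm (P x) \<le> p * norm x"
    using onorm_pos_le[OF P_bounded] onorm[OF P_bounded] by (simp_all add: p_def)
  have spheres: "unit_sphere_of Y \<noteq> {}" "unit_sphere_of Y0 \<noteq> {}"
    using Y unit_sphere_of_nonempty_if_dim by auto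
  then have d: "d \<ge> 0" unfolding d_def by (rule subspace_dist_nonneg)
  define c where "c = 1 - p * d"
  have c: "c \<ge> 1/2" using small by (simp add: c_def p_def d_def)
  have lower: "c * norm v \<le> norm (P v)" if "v \<in> Y0" for v
    using linear_projection_norm_lower_bound[OF P P_bounded spheres(1) Y(2) that]
    by (simp add: c_def p_def d_def)
  have inj: "inj_on P Y0"
    using c lower by (intro inj_on_if_norm_lower_bound[OF P_linear Y(2), of c]) auto
  have "P ` Y0 = Y"
  proof (rule fd.subspace_dim_equal)
    show "subspace (P ` Y0)" using P_linear Y(2) by (rule linear_subspace_image)
    show "P ` Y0 \<subseteq> Y" using P by (auto simp: linear_projection_def)
    show "dim Y \<le> dim (P ` Y0)"
    proof -
      have "span Y0 = Y0" using Y(2) by (rule span_eq_iff[THEN iffD2])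
      from fd_pair.dim_image_eq[OF P_linear, of Y0, unfolded this, OF inj] Y(3)
      show ?thesis by simp
    qed
  qed (use Y in simp)
  then obtain Q where Q: "linear_projection Q Y0" "\<And>x. P (Q x) = P x"
    using linear_projection_along_kernel[OF P_linear _ inj Y(2)] P
    by (auto simp: linear_projection_def)
  have "norm (Q x) \<le> (p + 2 * p\<^sup>2 * d) * norm x" for x
  proof -
    have "Q x \<in> Y0" using Q(1) by (auto simp: linear_projection_def)
    then have "c * norm (Q x) \<le> norm (P (Q x))" by (rule lower)
    also have "\<dots> \<le> p * norm x" using Q(2) p(2) by simp
    also have "p * norm x \<le> (p + 2 * p\<^sup>2 * d) * c * norm x"
    proof (rule mult_right_mono)
      have "(p + 2 * p\<^sup>2 * d) * c = p + p\<^sup>2 * d * (1 - 2 * (p * d))"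
        by (simp add: c_def algebra_simps power2_eq_square)
      moreover have "p\<^sup>2 * d * (1 - 2 * (p * d)) \<ge> 0"
        using small d by (simp add: p_def d_def)
      ultimately show "p \<le> (p + 2 * p\<^sup>2 * d) * c" by simp
    qed simp
    finally show ?thesis
      using c by (simp add: mult.commute mult.left_commute)
  qed
  moreover have "p + 2 * p\<^sup>2 * d \<ge> 0" using p(1) d by simp
  ultimately have "onorm Q \<le> p + 2 * p\<^sup>2 * d" by (intro onorm_bound) auto
  with proj_const_le_onorm[OF Q(1)] show ?thesis
    by (simp add: p_def d_def)
qed

lemma proj_const_le_if_dist_small:
  fixes Y Y0 :: "'a set"
  assumes Y: "subspace Y" "subspace Y0" "dim Y0 = dim Y" "dim Y \<ge> 1"
    and small: "(proj_const Y + 1) * subspace_dist Y Y0 \<le> 1/2"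
  shows "proj_const Y0 \<le> proj_const Y + 2 * (proj_const Y + 1)\<^sup>2 * subspace_dist Y Y0"
proof (rule field_le_epsilon)
  fix e :: real assume "e > 0"
  define L d where "L = proj_const Y + 1" and "d = subspace_dist Y Y0"
  obtain P where P: "linear_projection P Y" "onorm P < proj_const Y + min e 1"
    using proj_const_approx[OF Y(1), of "min e 1"] \<open>e > 0\<close> by auto
  have d: "d \<ge> 0"
    unfolding d_def using Y unit_sphere_of_nonempty_if_dim by (intro subspace_dist_nonneg) auto
  have p: "0 \<le> onorm P" "onorm P \<le> L"
    using P onorm_pos_le linear_imp_bounded_linear
    by (auto simp: L_def linear_projection_def)
  have "onorm P * d \<le> L * d"
    using p d by (intro mult_right_mono)
  then have "proj_const Y0 \<le> onorm P + 2 * (onorm P)\<^sup>2 * d"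
    using proj_const_perturbation[OF P(1) Y] small by (simp add: L_def d_def)
  also have "\<dots> \<le> proj_const Y + e + 2 * L\<^sup>2 * d"
    using P(2) p d by (intro add_mono mult_right_mono mult_left_mono power_mono) auto
  finally show "proj_const Y0 \<le> proj_const Y + 2 * (proj_const Y + 1)\<^sup>2 * subspace_dist Y Y0 + e"
    by (simp add: L_def d_def)
qed

lemma proj_const_le_add_subspace_dist:
  fixes Y :: "'a set"
  assumes Y: "subspace Y" "dim Y \<ge> 1"
  shows "\<exists>C>0. \<forall>Y0 :: 'a set. subspace Y0 \<and> dim Y0 = dim Y \<longrightarrow>
           proj_const Y0 \<le> proj_const Y + C * subspace_dist Y Y0"
proof -
  obtain M where M: "\<And>V :: 'a set. subspace V \<Longrightarrow> proj_const V \<le> M"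
    using proj_const_uniform_bound by blast
  define L where "L = proj_const Y + 1"
  have L: "L \<ge> 1" and M_nonneg: "M \<ge> 0"
    using proj_const_nonneg[OF Y(1)] M[OF Y(1)] by (auto simp: L_def)
  define C where "C = 2 * L * (L + M)"
  have "proj_const Y0 \<le> proj_const Y + C * subspace_dist Y Y0"
    if Y0: "subspace Y0" "dim Y0 = dim Y" for Y0
  proof -
    define d where "d = subspace_dist Y Y0"
    have d: "d \<ge> 0"
      unfolding d_def using Y Y0 unit_sphere_of_nonempty_if_dim by (intro subspace_dist_nonneg) auto
    show ?thesis
    proof (cases "L * d \<le> 1/2")
      case True
      then have "proj_const Y0 \<le> proj_const Y + 2 * L\<^sup>2 * d"
        using proj_const_le_if_dist_small[OF Y(1) Y0 Y(2)] by (simp add: L_def d_def)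
      also have "2 * L\<^sup>2 * d \<le> C * d"
        using L M_nonneg d by (intro mult_right_mono) (simp_all add: C_def power2_eq_square algebra_simps)
      finally show ?thesis by (simp add: d_def)
    next
      case False
      then have "1 \<le> 2 * L * d" by linarith
      then have "M \<le> 2 * L * d * M"
        using M_nonneg mult_right_mono[of 1 "2 * L * d" M] by simp
      also have "\<dots> \<le> C * d"
        using L M_nonneg d by (simp add: C_def algebra_simps)
      finally show ?thesis
        using M[OF Y0(1)] proj_const_nonneg[OF Y(1)] by (simp add: d_def)
    qed
  qed
  moreover have "C > 0"
    using L M_nonneg by (simp add: C_def)
  ultimately show ?thesis by blast
qed

end

theorem mainTheorem15:
  fixes Y :: "'a::real_normed_vector set" and n k :: nat
  assumes "\<exists>B. finite B \<and> span B = (UNIV :: 'a set)"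
    and "dim (UNIV :: 'a set) = n"
    and "subspace Y" and "dim Y = k"
    and "1 \<le> k" and "k \<le> n - 1"
  shows "\<exists>C>0. \<forall>Y0 :: 'a set. subspace Y0 \<and> dim Y0 = k \<longrightarrow>
           proj_const Y0 \<le> proj_const Y + C * subspace_dist Y Y0"
proof -
  obtain S :: "'a set" where S: "finite S" "span S = UNIV"
    using assms(1) by blast
  obtain B :: "'a set" where B: "independent B" "UNIV \<subseteq> span B"
    by (meson basis_exists)
  then have "finite B" "span B = UNIV"
    using independent_span_bound[OF S(1) B(1)] S(2) by auto
  with B interpret finite_basis B
    by unfold_locales
  show ?thesis
    using proj_const_le_add_subspace_dist[OF assms(3)] assms(4,5) by simp
qed

end
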